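(* Every (possibly rotated) rectangle $R\subset\mathbb{R}^2$ with side lengths $a$ and $b$ satisfies $N(R)\leqslant(a+\sqrt2)(b+\sqrt2)$.
   Context: For $D\subseteq\mathbb{R}^2$, the integer cardinality is $N(D)=|\mathbb{Z}^2\cap D|$, the number of integer points in $D$. *)

theory Defs
  imports Complex_Main
begin

definition rect :: "real \<times> real \<Rightarrow> real \<Rightarrow> real \<Rightarrow> real \<Rightarrow> (real \<times> real) set" where
  "rect p \<theta> a b = {(fst p + s * cos \<theta> - t * sin \<theta>, snd p + s * sin \<theta> + t * cos \<theta>) | s t.
      0 \<le> s \<and> s \<le> a \<and> 0 \<le> t \<and> t \<le> b}"

definition int_card :: "(real \<times> real) set \<Rightarrow> nat" where
  "int_card D = card {z :: int \<times> int. (of_int (fst z), of_int (snd z)) \<in> D}"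

end

theory Submission
  imports Defs "HOL-Analysis.Analysis"
begin

text \<open>Put an open unit square around every integer point of the rectangle. These squares are
  pairwise disjoint, and each lies within distance \<open>sqrt (1/2)\<close> of a point of the rectangle,
  hence inside the rectangle enlarged by \<open>sqrt (1/2)\<close> on every side. Comparing areas, the number
  of integer points is at most \<open>(a + sqrt 2) * (b + sqrt 2)\<close>.\<close>

definition rotate :: "real \<Rightarrow> real^2 \<Rightarrow> real^2" where
  "rotate \<theta> u = vector [cos \<theta> * u$1 - sin \<theta> * u$2, sin \<theta> * u$1 + cos \<theta> * u$2]"

definition lattice_point :: "int \<times> int \<Rightarrow> real^2" where
  "lattice_point z = vector [of_int (fst z), of_int (snd z)]"

definition unit_square :: "int \<times> int \<Rightarrow> (real^2) set" where
  "unit_square z = box (lattice_point z - vec (1/2)) (lattice_point z + vec (1/2))"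

lemma orthogonal_transformation_rotate: "orthogonal_transformation (rotate \<theta>)"
proof -
  have "linear (rotate \<theta>)"
    by (rule linearI) (simp_all add: rotate_def vec_eq_iff forall_2 algebra_simps)
  moreover have "rotate \<theta> v \<bullet> rotate \<theta> w = v \<bullet> w" for v w
  proof -
    have "rotate \<theta> v \<bullet> rotate \<theta> w = (cos \<theta> * cos \<theta> + sin \<theta> * sin \<theta>) * (v$1 * w$1 + v$2 * w$2)"
      by (simp add: rotate_def inner_vec_def sum_2 algebra_simps del: sin_cos_squared_add3)
    then show ?thesis by (simp add: inner_vec_def sum_2)
  qed
  ultimately show ?thesis by (simp add: orthogonal_transformation_def)
qed

lemma measure_cbox_2:
  fixes l u :: "real^2"
  assumes "l$1 \<le> u$1" "l$2 \<le> u$2"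
  shows "measure lebesgue (cbox l u) = (u$1 - l$1) * (u$2 - l$2)"
    and "measure lebesgue (box l u) = (u$1 - l$1) * (u$2 - l$2)"
proof -
  have le: "l$i \<le> u$i" for i
    using assms exhaust_2[of i] by auto
  then have ne: "cbox l u \<noteq> {}"
    by (metis empty_iff mem_box_cart(2) order_refl)
  show cbox: "measure lebesgue (cbox l u) = (u$1 - l$1) * (u$2 - l$2)"
    using content_cbox_cart[OF ne] by (simp add: prod_2 UNIV_2)
  have "\<And>b. b \<in> Basis \<Longrightarrow> l \<bullet> b \<le> u \<bullet> b"
    using le by (auto simp: Basis_vec_def cart_eq_inner_axis[symmetric])
  then have "measure lebesgue (box l u) = measure lebesgue (cbox l u)"
    by simp
  with cbox show "measure lebesgue (box l u) = (u$1 - l$1) * (u$2 - l$2)"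
    by simp
qed

lemma box_subset_ball_2:
  fixes c :: "real^2"
  shows "box (c - vec r) (c + vec r) \<subseteq> ball c (sqrt 2 * r)"
proof
  fix x assume "x \<in> box (c - vec r) (c + vec r)"
  then have bounds: "c$i - r < x$i" "x$i < c$i + r" for i
    by (auto simp: mem_box_cart)
  have "r > 0"
    using bounds[of 1] by linarith
  have "\<bar>x$i - c$i\<bar> < \<bar>r\<bar>" for i
    using bounds[of i] by linarith
  then have sq: "(x$i - c$i)\<^sup>2 < r\<^sup>2" for i
    by (meson abs_le_square_iff not_le)
  have "dist c x = sqrt ((x$1 - c$1)\<^sup>2 + (x$2 - c$2)\<^sup>2)"
    by (simp add: dist_vec_def L2_set_def sum_2 dist_real_def power2_commute)
  also have "\<dots> < sqrt (2 * r\<^sup>2)"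
    using sq[of 1] sq[of 2] by simp
  also have "\<dots> = sqrt 2 * r"
    using \<open>r > 0\<close> by (simp add: real_sqrt_mult)
  finally show "x \<in> ball c (sqrt 2 * r)"
    by simp
qed

lemma measure_unit_square: "measure lebesgue (unit_square z) = 1"
  using measure_cbox_2(2)[of "lattice_point z - vec (1/2)" "lattice_point z + vec (1/2)"]
  by (simp add: unit_square_def)

lemma disjoint_unit_squares: "disjoint_family unit_square"
  unfolding disjoint_family_on_def
proof (intro ballI impI)
  fix z w :: "int \<times> int" assume "z \<noteq> w"
  show "unit_square z \<inter> unit_square w = {}"
  proof (rule ccontr)
    assume "unit_square z \<inter> unit_square w \<noteq> {}"
    then obtain x where "x \<in> unit_square z" "x \<in> unit_square w"
      by blast
    then have "\<bar>of_int (fst z) - of_int (fst w)\<bar> < (1::real)"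
      and "\<bar>of_int (snd z) - of_int (snd w)\<bar> < (1::real)"
      by (auto simp: unit_square_def lattice_point_def mem_box_cart forall_2)
    then have "fst z = fst w" "snd z = snd w"
      by linarith+
    with \<open>z \<noteq> w\<close> show False
      by (simp add: prod_eq_iff)
  qed
qed

lemma card_le_measure_if_unit_squares_subset:
  fixes S :: "(int \<times> int) set"
  assumes T: "T \<in> lmeasurable" and sub: "\<And>z. z \<in> S \<Longrightarrow> unit_square z \<subseteq> T"
  shows "real (card S) \<le> measure lebesgue T"
proof (cases "finite S")
  case False
  then show ?thesis by simp
next
  case True
  have meas: "unit_square z \<in> lmeasurable" for z
    by (simp add: unit_square_def)
  have "real (card S) = (\<Sum>z\<in>S. measure lebesgue (unit_square z))"
    by (simp add: measure_unit_square)
  also have "\<dots> = measure lebesgue (\<Union>z\<in>S. unit_square z)"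
  proof (rule measure_finite_Union[symmetric])
    show "disjoint_family_on unit_square S"
      using disjoint_family_on_mono[OF subset_UNIV disjoint_unit_squares] .
    show "emeasure lebesgue (unit_square z) \<noteq> \<infinity>" for z
      using fmeasurableD2[OF meas[of z]] by simp
  qed (use True meas in auto)
  also have "\<dots> \<le> measure lebesgue T"
    using True T sub meas by (intro measure_mono_fmeasurable) auto
  finally show ?thesis .
qed

lemma ball_subset_image_cbox_thickening:
  fixes f :: "real^'n \<Rightarrow> real^'n"
  assumes f: "orthogonal_transformation f" and x: "x \<in> (+) P ` f ` cbox l u"
  shows "ball x r \<subseteq> (+) P ` f ` cbox (l - vec r) (u + vec r)"
proof -
  obtain v where v: "v \<in> cbox l u" "x = P + f v"
    using x by auto
  have "ball v r \<subseteq> cbox (l - vec r) (u + vec r)"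
  proof
    fix w assume "w \<in> ball v r"
    then have near: "\<bar>w$i - v$i\<bar> < r" for i
      using component_le_norm_cart[of "w - v" i] by (simp add: dist_norm norm_minus_commute)
    have inside: "l$i \<le> v$i" "v$i \<le> u$i" for i
      using v(1) by (simp_all add: mem_box_cart)
    have "l$i - r \<le> w$i \<and> w$i \<le> u$i + r" for i
      using near[of i] inside[of i] by linarith
    then show "w \<in> cbox (l - vec r) (u + vec r)"
      by (simp add: mem_box_cart)
  qed
  moreover have "ball x r = (+) P ` f ` ball v r"
    using ball_translation[of P "f v" r] image_orthogonal_transformation_ball[OF f, of v r] v(2)
    by simp
  ultimately show ?thesis
    by (simp add: image_mono)
qed

lemma mem_rect_imp_mem_rotated_cbox:
  assumes "(x, y) \<in> rect p \<theta> a b"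
  shows "vector [x, y] \<in> (+) (vector [fst p, snd p]) ` rotate \<theta> ` cbox 0 (vector [a, b])"
proof -
  obtain s t where st: "0 \<le> s" "s \<le> a" "0 \<le> t" "t \<le> b"
    and xy: "x = fst p + s * cos \<theta> - t * sin \<theta>" "y = snd p + s * sin \<theta> + t * cos \<theta>"
    using assms unfolding rect_def by auto
  have "(vector [s, t] :: real^2) \<in> cbox 0 (vector [a, b])"
    using st unfolding mem_box_cart forall_2 by simp
  moreover have "vector [x, y] = vector [fst p, snd p] + rotate \<theta> (vector [s, t])"
    by (simp add: xy rotate_def vec_eq_iff forall_2)
  ultimately show ?thesis
    by blast
qed

theorem proposition12:
  fixes p :: "real \<times> real" and \<theta> a b :: real
  assumes "a > 0" and "b > 0"
  shows "real (int_card (rect p \<theta> a b)) \<le> (a + sqrt 2) * (b + sqrt 2)"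
proof -
  define P :: "real^2" where "P = vector [fst p, snd p]"
  define r where "r = sqrt 2 * (1/2)"
  define K :: "(real^2) set" where "K = cbox (0 - vec r) (vector [a, b] + vec r)"
  define T where "T = (+) P ` rotate \<theta> ` K"
  have T: "T \<in> lmeasurable"
    unfolding T_def K_def
    by (intro measurable_translation measurable_orthogonal_image orthogonal_transformation_rotate) simp
  have "measure lebesgue T = measure lebesgue K"
    unfolding T_def K_def
    by (simp add: measure_translation measure_orthogonal_image orthogonal_transformation_rotate)
  also have "\<dots> = (a + 2 * r) * (b + 2 * r)"
    using measure_cbox_2(1)[of "0 - vec r" "vector [a, b] + vec r"] assms
    by (simp add: K_def r_def algebra_simps)
  also have "\<dots> = (a + sqrt 2) * (b + sqrt 2)"
    by (simp add: r_def)
  finally have area: "measure lebesgue T = (a + sqrt 2) * (b + sqrt 2)" .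
  have "unit_square z \<subseteq> T" if "(of_int (fst z), of_int (snd z)) \<in> rect p \<theta> a b" for z
  proof -
    have "unit_square z \<subseteq> ball (lattice_point z) r"
      unfolding unit_square_def r_def by (rule box_subset_ball_2)
    also have "\<dots> \<subseteq> T"
      using ball_subset_image_cbox_thickening[OF orthogonal_transformation_rotate
          mem_rect_imp_mem_rotated_cbox[OF that]]
      by (simp add: T_def K_def P_def lattice_point_def)
    finally show ?thesis .
  qed
  then have "real (int_card (rect p \<theta> a b)) \<le> measure lebesgue T"
    unfolding int_card_def by (intro card_le_measure_if_unit_squares_subset[OF T]) simp
  with area show ?thesis
    by simp
qed

end
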